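(* Let $S\subseteq\mathcal X$ be a finite nonempty set of candidates. The look-up based CF algorithm $$A_{\mathrm{LU}}(x)=\operatorname*{argmin}_{x'\in S} c(x,x'),$$ where ties among minimizers are broken by a fixed deterministic rule (a fixed total order on $S$, independent of $x$), is IPF stable globally.
   Context: Input space $\mathcal X=\mathcal X_1\times\cdots\times\mathcal X_D$, where each feature $d$ is either categorical ($\mathcal X_d$ a finite set) or numerical ($\mathcal X_d\subseteq\mathbb R$). Cost: $c(x,x')=\sum_{d=1}^D c_d(x_d,x'_d)$ with $c_d(x_d,x'_d)=\mathbb 1\{x_d\neq x'_d\}$ for categorical $d$ and $c_d(x_d,x'_d)=|F_d(x_d)-F_d(x'_d)|$ for numerical $d$, where $F_d$ is a fixed cumulative distribution function (nondecreasing) of feature $d$. A CF algorithm $A$ maps each $x\in\mathcal X$ to a probability distribution over $\mathcal X$; $A$ is deterministic at $x$ if this distribution is a point mass, written $A(x)$. $\Phi(x,x')$ denotes the set of all $w\in\mathcal X$ such that for each numerical $d$, $w_d$ lies in the closed interval between $x_d$ and $x'_d$, and for each categorical $d$, $w_d\in\{x_d,x'_d\}$. IPF stable: $A$ is IPF stable at $x$ if (1) $A$ is deterministic at $x$, and (2) for all $w\in\Phi(x,A(x))$, $A$ is deterministic at $w$ and $A(w)=A(x)$. $A$ is IPF stable globally if it is IPF stable at every $x\in\mathcal X$. *)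

theory Defs
  imports "HOL-Probability.Probability_Mass_Function" "HOL-Library.FuncSet"
begin

text \<open>Points of the input space are functions nat => real restricted (extensionally)
  to the feature indices 0..<D. Categorical feature values are encoded as reals;
  cat d says that feature d is categorical, Xd d is the domain of feature d.\<close>

definition input_space :: "nat \<Rightarrow> (nat \<Rightarrow> real set) \<Rightarrow> (nat \<Rightarrow> real) set" where
  "input_space D Xd = PiE {..<D} Xd"

definition is_cdf :: "(real \<Rightarrow> real) \<Rightarrow> bool" where
  "is_cdf G \<longleftrightarrow> mono G \<and> (\<forall>a. continuous (at_right a) G)
      \<and> (G \<longlongrightarrow> 0) at_bot \<and> (G \<longlongrightarrow> 1) at_top"

definition cost :: "nat \<Rightarrow> (nat \<Rightarrow> bool) \<Rightarrow> (nat \<Rightarrow> real \<Rightarrow> real)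
    \<Rightarrow> (nat \<Rightarrow> real) \<Rightarrow> (nat \<Rightarrow> real) \<Rightarrow> real" where
  "cost D cat F x x' = (\<Sum>d<D. if cat d then (if x d = x' d then 0 else 1)
                                 else \<bar>F d (x d) - F d (x' d)\<bar>)"

definition Phi :: "nat \<Rightarrow> (nat \<Rightarrow> bool) \<Rightarrow> (nat \<Rightarrow> real set)
    \<Rightarrow> (nat \<Rightarrow> real) \<Rightarrow> (nat \<Rightarrow> real) \<Rightarrow> (nat \<Rightarrow> real) set" where
  "Phi D cat Xd x x' = {w \<in> input_space D Xd. \<forall>d<D.
       (if cat d then w d \<in> {x d, x' d}
        else w d \<in> {min (x d) (x' d) .. max (x d) (x' d)})}"

definition deterministic_at :: "('a \<Rightarrow> 'a pmf) \<Rightarrow> 'a \<Rightarrow> bool" where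
  "deterministic_at A x \<longleftrightarrow> (\<exists>y. A x = return_pmf y)"

definition det_out :: "('a \<Rightarrow> 'a pmf) \<Rightarrow> 'a \<Rightarrow> 'a" where
  "det_out A x = (THE y. A x = return_pmf y)"

definition IPF_stable_at :: "nat \<Rightarrow> (nat \<Rightarrow> bool) \<Rightarrow> (nat \<Rightarrow> real set)
    \<Rightarrow> ((nat \<Rightarrow> real) \<Rightarrow> (nat \<Rightarrow> real) pmf) \<Rightarrow> (nat \<Rightarrow> real) \<Rightarrow> bool" where
  "IPF_stable_at D cat Xd A x \<longleftrightarrow> deterministic_at A x \<and>
     (\<forall>w \<in> Phi D cat Xd x (det_out A x).
        deterministic_at A w \<and> det_out A w = det_out A x)"

definition IPF_stable_globally :: "nat \<Rightarrow> (nat \<Rightarrow> bool) \<Rightarrow> (nat \<Rightarrow> real set)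
    \<Rightarrow> ((nat \<Rightarrow> real) \<Rightarrow> (nat \<Rightarrow> real) pmf) \<Rightarrow> bool" where
  "IPF_stable_globally D cat Xd A \<longleftrightarrow>
     (\<forall>x \<in> input_space D Xd. IPF_stable_at D cat Xd A x)"

definition lookup_choice :: "('a \<Rightarrow> 'a \<Rightarrow> real) \<Rightarrow> 'a set \<Rightarrow> ('a \<times> 'a) set \<Rightarrow> 'a \<Rightarrow> 'a" where
  "lookup_choice c S R x = (THE y. y \<in> S \<and> (\<forall>z\<in>S. c x y \<le> c x z)
       \<and> (\<forall>z\<in>S. c x z = c x y \<longrightarrow> (y, z) \<in> R))"

end

theory Submission
  imports Defs
begin

text \<open>The cost is a sum of per-feature pseudometrics, so it satisfies the triangle inequality,
  and it is additive along every point w of \<open>Phi x y\<close>: per feature, w d either coincides with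
  x d or y d (categorical) or lies between them, where a monotone F d keeps F d (w d) between
  F d (x d) and F d (y d). Hence, if y minimises the cost from x over S, then for every z \<in> S
  the chain c x w + c w y = c x y \<le> c x z \<le> c x w + c w z shows that y also minimises the cost
  from w; equality in this chain forces a tie at x, which the fixed order already broke in
  favour of y.\<close>

definition is_lookup_choice :: "('a \<Rightarrow> 'a \<Rightarrow> real) \<Rightarrow> 'a set \<Rightarrow> ('a \<times> 'a) set \<Rightarrow> 'a \<Rightarrow> 'a \<Rightarrow> bool" where
  "is_lookup_choice c S R x y \<longleftrightarrow> y \<in> S \<and> (\<forall>z\<in>S. c x y \<le> c x z)
       \<and> (\<forall>z\<in>S. c x z = c x y \<longrightarrow> (y, z) \<in> R)"

lemma lookup_choice_eq_The: "lookup_choice c S R x = (THE y. is_lookup_choice c S R x y)"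
  by (simp add: lookup_choice_def is_lookup_choice_def)

lemma linear_order_on_finite_has_least:
  assumes "linear_order_on S R" "finite M" "M \<noteq> {}" "M \<subseteq> S"
  shows "\<exists>y\<in>M. \<forall>z\<in>M. (y, z) \<in> R"
  using assms(2-4)
proof (induction M rule: finite_ne_induct)
  case (singleton a)
  then show ?case
    using assms(1) by (auto simp: order_on_defs dest: refl_onD)
next
  case (insert a M)
  then obtain y where y: "y \<in> M" "\<forall>z\<in>M. (y, z) \<in> R" by auto
  have "a \<in> S" "y \<in> S" using insert y by auto
  then have "a = y \<or> (a, y) \<in> R \<or> (y, a) \<in> R"
    using assms(1) by (auto simp: order_on_defs total_on_def)
  then show ?case
    using y assms(1) \<open>a \<in> S\<close> by (auto simp: order_on_defs dest: refl_onD transD)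
qed

lemma is_lookup_choice_exists:
  assumes "finite S" "S \<noteq> {}" "linear_order_on S R"
  shows "\<exists>y. is_lookup_choice c S R x y"
proof -
  define M where "M = {y \<in> S. c x y = Min (c x ` S)}"
  have "finite M" "M \<noteq> {}" "M \<subseteq> S"
    using assms(1,2) Min_in[of "c x ` S"] by (auto simp: M_def simp del: Min_in)
  then obtain y where "y \<in> M" "\<forall>z\<in>M. (y, z) \<in> R"
    using linear_order_on_finite_has_least[OF assms(3)] by blast
  then show ?thesis
    using assms(1) by (auto simp: is_lookup_choice_def M_def)
qed

lemma is_lookup_choice_unique:
  assumes "linear_order_on S R" "is_lookup_choice c S R x y" "is_lookup_choice c S R x y'"
  shows "y = y'"
proof -
  have "c x y = c x y'"
    using assms(2,3) by (auto simp: is_lookup_choice_def intro: order_antisym)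
  then have "(y, y') \<in> R" "(y', y) \<in> R"
    using assms(2,3) by (auto simp: is_lookup_choice_def)
  then show ?thesis
    using assms(1) by (auto simp: order_on_defs dest: antisymD)
qed

lemma is_lookup_choice_lookup_choice:
  assumes "finite S" "S \<noteq> {}" "linear_order_on S R"
  shows "is_lookup_choice c S R x (lookup_choice c S R x)"
  unfolding lookup_choice_eq_The
  using is_lookup_choice_exists[OF assms] is_lookup_choice_unique[OF assms(3)]
  by (metis theI)

lemma lookup_choice_eqI:
  assumes "finite S" "S \<noteq> {}" "linear_order_on S R" "is_lookup_choice c S R x y"
  shows "lookup_choice c S R x = y"
  using is_lookup_choice_unique[OF assms(3) is_lookup_choice_lookup_choice[OF assms(1-3)] assms(4)] .

lemma is_lookup_choice_intermediate:
  assumes choice: "is_lookup_choice c S R x y"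
    and triangle: "\<And>z. c x z \<le> c x w + c w z"
    and additive: "c x y = c x w + c w y"
  shows "is_lookup_choice c S R w y"
  unfolding is_lookup_choice_def
proof (intro conjI ballI impI)
  show "y \<in> S" using choice by (simp add: is_lookup_choice_def)
next
  fix z assume "z \<in> S"
  then have "c x y \<le> c x z" using choice by (simp add: is_lookup_choice_def)
  then show "c w y \<le> c w z" using triangle[of z] additive by linarith
next
  fix z assume "z \<in> S" "c w z = c w y"
  moreover have "c x y \<le> c x z" using choice \<open>z \<in> S\<close> by (simp add: is_lookup_choice_def)
  ultimately have "c x z = c x y" using triangle[of z] additive by linarith
  then show "(y, z) \<in> R" using choice \<open>z \<in> S\<close> by (simp add: is_lookup_choice_def)
qed

lemma cost_triangle: "cost D cat F x z \<le> cost D cat F x w + cost D cat F w z"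
  unfolding cost_def sum.distrib[symmetric]
  by (rule sum_mono) auto

lemma mono_abs_diff_split:
  fixes f :: "real \<Rightarrow> real"
  assumes "mono f" "min a b \<le> t" "t \<le> max a b"
  shows "\<bar>f a - f b\<bar> = \<bar>f a - f t\<bar> + \<bar>f t - f b\<bar>"
proof (cases "a \<le> b")
  case True
  then have "f a \<le> f t" "f t \<le> f b" using assms by (auto intro: monoD)
  then show ?thesis by linarith
next
  case False
  then have "f b \<le> f t" "f t \<le> f a" using assms by (auto intro: monoD)
  then show ?thesis by linarith
qed

lemma cost_additive_Phi:
  assumes "\<And>d. d < D \<Longrightarrow> \<not> cat d \<Longrightarrow> mono (F d)"
    and "w \<in> Phi D cat Xd x y"
  shows "cost D cat F x y = cost D cat F x w + cost D cat F w y"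
  unfolding cost_def sum.distrib[symmetric]
proof (rule sum.cong[OF refl])
  fix d assume "d \<in> {..<D}"
  show "(if cat d then if x d = y d then 0 else 1 else \<bar>F d (x d) - F d (y d)\<bar>) =
        (if cat d then if x d = w d then 0 else 1 else \<bar>F d (x d) - F d (w d)\<bar>) +
        (if cat d then if w d = y d then 0 else 1 else \<bar>F d (w d) - F d (y d)\<bar>)"
  proof (cases "cat d")
    case True
    then have "w d \<in> {x d, y d}" using assms(2) \<open>d \<in> {..<D}\<close> by (auto simp: Phi_def)
    then show ?thesis using True by auto
  next
    case False
    then have "min (x d) (y d) \<le> w d" "w d \<le> max (x d) (y d)"
      using assms(2) \<open>d \<in> {..<D}\<close> by (auto simp: Phi_def)
    then show ?thesis
      using False mono_abs_diff_split assms(1) \<open>d \<in> {..<D}\<close> by simp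
  qed
qed

lemma det_out_return_pmf [simp]: "det_out (\<lambda>x. return_pmf (f x)) x = f x"
  by (simp add: det_out_def)

lemma deterministic_at_return_pmf [simp]: "deterministic_at (\<lambda>x. return_pmf (f x)) x"
  by (auto simp: deterministic_at_def)

theorem theorem3:
  fixes D :: nat and cat :: "nat \<Rightarrow> bool" and Xd :: "nat \<Rightarrow> real set"
    and F :: "nat \<Rightarrow> real \<Rightarrow> real"
    and S :: "(nat \<Rightarrow> real) set" and R :: "((nat \<Rightarrow> real) \<times> (nat \<Rightarrow> real)) set"
  assumes "\<And>d. d < D \<Longrightarrow> cat d \<Longrightarrow> finite (Xd d)"
    and "\<And>d. d < D \<Longrightarrow> \<not> cat d \<Longrightarrow> is_cdf (F d)"
    and "S \<subseteq> input_space D Xd" and "finite S" and "S \<noteq> {}"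
    and "linear_order_on S R"
  shows "IPF_stable_globally D cat Xd
           (\<lambda>x. return_pmf (lookup_choice (cost D cat F) S R x))"
  unfolding IPF_stable_globally_def IPF_stable_at_def
proof (intro ballI conjI deterministic_at_return_pmf)
  fix x w
  let ?c = "cost D cat F" and ?y = "lookup_choice (cost D cat F) S R x"
  assume "w \<in> Phi D cat Xd x (det_out (\<lambda>x. return_pmf (lookup_choice ?c S R x)) x)"
  then have "?c x ?y = ?c x w + ?c w ?y"
    using cost_additive_Phi assms(2) by (simp add: is_cdf_def)
  then have "is_lookup_choice ?c S R w ?y"
    using is_lookup_choice_intermediate[OF is_lookup_choice_lookup_choice[OF assms(4-6)]]
      cost_triangle by blast
  then show "det_out (\<lambda>x. return_pmf (lookup_choice ?c S R x)) w
      = det_out (\<lambda>x. return_pmf (lookup_choice ?c S R x)) x"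
    using lookup_choice_eqI[OF assms(4-6)] by simp
qed

end
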